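(* Let $(\mathcal{Z},d)$ be a metric space and $U:\mathcal{Z}^*\to[0,1]$ a potential that is $\beta(k)$-Lipschitz stable with respect to $d$ for a non-increasing $\beta:\mathbb{N}\to[0,1]$. Let $\mathcal{D}_s,\mathcal{D}_t$ be distributions on $\mathcal{Z}$. Then for all $m\in\mathbb{N}$ and all $z\in\mathcal{Z}$, $$\big|\nu(z;U,\mathcal{D}_s,m)-\nu(z;U,\mathcal{D}_t,m)\big|\le\frac{2}{m}\sum_{k=1}^{m-1}k\,\beta(k)\cdot W_1(\mathcal{D}_s,\mathcal{D}_t).$$
   Context: $\mathcal{Z}^*=\bigcup_{n\ge0}\mathcal{Z}^n$; a potential is a measurable, permutation-invariant $U:\mathcal{Z}^*\to[0,1]$; $S\cup\{z\}$ is the tuple $S$ with $z$ appended. $U$ is $\beta(k)$-Lipschitz stable w.r.t. $d$ if for all $k$, $S\in\mathcal{Z}^{k-1}$, $z,z'\in\mathcal{Z}$: $|U(S\cup\{z\})-U(S\cup\{z'\})|\le\beta(k)d(z,z')$. Wasserstein distance: $W_1(\mathcal{D}_s,\mathcal{D}_t)=\inf_{\gamma\in\Gamma_{st}}\mathbb{E}_{(s,t)\sim\gamma}[d(s,t)]$, where $\Gamma_{st}$ is the set of couplings (joint distributions on $\mathcal{Z}\times\mathcal{Z}$ with marginals $\mathcal{D}_s,\mathcal{D}_t$). Data Shapley value of entry $b_i$ in $B=(b_1,\dots,b_m)$: $\phi(b_i;U,B)=\frac1m\sum_{k=1}^m\binom{m-1}{k-1}^{-1}\sum_{I\subseteq[m]\setminus\{i\},|I|=k-1}(U(B_I\cup\{b_i\})-U(B_I))$.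 Distributional Shapley value: $\nu(z;U,\mathcal{D},m)=\mathbb{E}_{B\sim\mathcal{D}^{m-1}}[\phi(z;U,B\cup\{z\})]$ with $B$ i.i.d. from $\mathcal{D}$. *)

theory Defs
  imports "HOL-Probability.Probability"
begin

text \<open>Tuples in Z^* are lists; S \<union> {z} is S @ [z].\<close>

definition potential :: "('a::metric_space list \<Rightarrow> real) \<Rightarrow> bool" where
  "potential U \<longleftrightarrow>
     (\<forall>n. (\<lambda>x. U (map x [0..<n])) \<in> borel_measurable (PiM {..<n} (\<lambda>_. borel))) \<and>
     (\<forall>xs ys. mset xs = mset ys \<longrightarrow> U xs = U ys) \<and>
     (\<forall>xs. 0 \<le> U xs \<and> U xs \<le> 1)"

definition lipschitz_stable :: "('a::metric_space list \<Rightarrow> real) \<Rightarrow> (nat \<Rightarrow> real) \<Rightarrow> bool" where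
  "lipschitz_stable U \<beta> \<longleftrightarrow>
     (\<forall>k\<ge>1. \<forall>S z z'. length S = k - 1 \<longrightarrow>
        \<bar>U (S @ [z]) - U (S @ [z'])\<bar> \<le> \<beta> k * dist z z')"

definition couplings :: "'a::metric_space measure \<Rightarrow> 'a measure \<Rightarrow> ('a \<times> 'a) measure set" where
  "couplings Ds Dt = {\<gamma>. prob_space \<gamma> \<and> sets \<gamma> = sets (Ds \<Otimes>\<^sub>M Dt) \<and>
      distr \<gamma> Ds fst = Ds \<and> distr \<gamma> Dt snd = Dt}"

definition W1 :: "'a::metric_space measure \<Rightarrow> 'a measure \<Rightarrow> ennreal" where
  "W1 Ds Dt = (INF \<gamma>\<in>couplings Ds Dt. \<integral>\<^sup>+ p. ennreal (dist (fst p) (snd p)) \<partial>\<gamma>)"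

definition data_shapley :: "('a list \<Rightarrow> real) \<Rightarrow> 'a list \<Rightarrow> nat \<Rightarrow> real" where
  "data_shapley U B i = (let m = length B in
     (1 / real m) * (\<Sum>k=1..m. (1 / real ((m - 1) choose (k - 1))) *
        (\<Sum>I\<in>{I. I \<subseteq> {0..<m} - {i} \<and> card I = k - 1}.
            U (nths B I @ [B ! i]) - U (nths B I))))"

text \<open>Distributional Shapley value: B ~ D^(m-1) i.i.d., z appended as last entry.\<close>
definition dist_shapley :: "('a list \<Rightarrow> real) \<Rightarrow> 'a \<Rightarrow> 'a measure \<Rightarrow> nat \<Rightarrow> real" where
  "dist_shapley U z D m =
     (\<integral>x. data_shapley U (map x [0..<m - 1] @ [z]) (m - 1) \<partial>(PiM {..<m - 1} (\<lambda>_. D)))"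

end

theory Submission
  imports Defs
begin

(* Fix a coupling gamma of Ds and Dt and draw the m - 1 background points as i.i.d. pairs from gamma.
   Switching their coordinates from the Dt-side to the Ds-side one at a time telescopes the difference
   of the two distributional Shapley values into m - 1 hybrid steps.  Changing the j-th point moves the
   Shapley value by at most w_j * d(s_j, t_j), because in every coalition containing j both U(S + z)
   and U(S) are Lipschitz stable; the weights w_j sum to (1/m) * sum_k (beta k + beta (k-1)) * (k-1),
   which monotonicity of beta bounds by (2/m) * sum_k k * beta k.  Integrating gives the bound with
   E_gamma d, and the infimum over couplings gives W1. *)

lemma lipschitz_stable_replace:
  fixes U :: "'a::metric_space list \<Rightarrow> real"
  assumes perm: "\<And>xs ys. mset xs = mset ys \<Longrightarrow> U xs = U ys"
    and lip: "lipschitz_stable U \<beta>"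
  shows "\<bar>U (xs @ x # ys) - U (xs @ y # ys)\<bar> \<le> \<beta> (Suc (length xs + length ys)) * dist x y"
proof -
  have "U (xs @ v # ys) = U ((xs @ ys) @ [v])" for v
    by (rule perm) simp
  moreover have "\<bar>U ((xs @ ys) @ [x]) - U ((xs @ ys) @ [y])\<bar> \<le> \<beta> (Suc (length xs + length ys)) * dist x y"
    using lip[unfolded lipschitz_stable_def, rule_format, of "Suc (length xs + length ys)" "xs @ ys"]
    by simp
  ultimately show ?thesis
    by simp
qed

lemma lipschitz_stable_map_agree:
  fixes U :: "'a::metric_space list \<Rightarrow> real"
  assumes perm: "\<And>xs ys. mset xs = mset ys \<Longrightarrow> U xs = U ys"
    and lip: "lipschitz_stable U \<beta>"
    and agree: "\<And>i. i \<noteq> j \<Longrightarrow> a i = b i"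
    and "distinct L"
  shows "\<bar>U (map a L @ ws) - U (map b L @ ws)\<bar>
    \<le> (if j \<in> set L then \<beta> (length L + length ws) * dist (a j) (b j) else 0)"
proof (cases "j \<in> set L")
  case False
  then have "map a L = map b L"
    by (auto intro!: map_cong agree)
  then show ?thesis
    using False by (simp del: map_eq_conv)
next
  case True
  then obtain L1 L2 where L: "L = L1 @ j # L2"
    by (meson split_list)
  with \<open>distinct L\<close> have "j \<notin> set L1" "j \<notin> set L2"
    by auto
  then have "map a L1 = map b L1" "map a L2 = map b L2"
    by (auto intro!: map_cong agree)
  then show ?thesis
    using lipschitz_stable_replace[OF perm lip, of "map b L1" "a j" "map b L2 @ ws" "b j"] True L
    by (simp del: map_eq_conv add: add.assoc)
qed

lemma nths_upt:
  assumes "I \<subseteq> {0..<n}"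
  shows "distinct (nths [0..<n] I)" "set (nths [0..<n] I) = I" "length (nths [0..<n] I) = card I"
proof -
  show "distinct (nths [0..<n] I)"
    by simp
  show "set (nths [0..<n] I) = I"
    using assms by (auto simp: set_nths) (metis add_0 atLeastLessThan_iff nth_upt subsetD)
  have "{i. i < n \<and> i \<in> I} = I"
    using assms by auto
  then show "length (nths [0..<n] I) = card I"
    by (simp add: length_nths)
qed

definition shapley_coalitions :: "nat \<Rightarrow> nat \<Rightarrow> nat set set" where
  "shapley_coalitions n k = {I. I \<subseteq> {0..<n} \<and> card I = k - 1}"

lemma card_shapley_coalitions: "card (shapley_coalitions n k) = n choose (k - 1)"
  unfolding shapley_coalitions_def using n_subsets[of "{0..<n}" "k - 1"] by simp

lemma data_shapley_snoc:
  "data_shapley U (xs @ [z]) (length xs) =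
    1 / real (Suc (length xs)) * (\<Sum>k=1..Suc (length xs). 1 / real (length xs choose (k - 1)) *
      (\<Sum>I\<in>shapley_coalitions (length xs) k. U (nths xs I @ [z]) - U (nths xs I)))"
proof -
  have "{0..<Suc (length xs)} - {length xs} = {0..<length xs}"
    by auto
  moreover have "nths (xs @ [z]) I = nths xs I" if "I \<in> shapley_coalitions (length xs) k" for I k
    using that by (auto simp: nths_append shapley_coalitions_def)
  ultimately show ?thesis
    unfolding data_shapley_def shapley_coalitions_def Let_def
    by (intro arg_cong2[where f = "(*)"] sum.cong refl) (auto simp: nth_append)
qed

lemma abs_weighted_sum_le:
  fixes f g :: "'i \<Rightarrow> 'j \<Rightarrow> real"
  assumes "0 \<le> c" "\<And>k. k \<in> K \<Longrightarrow> 0 \<le> ck k"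
    and "\<And>k I. k \<in> K \<Longrightarrow> I \<in> J k \<Longrightarrow> \<bar>f k I\<bar> \<le> g k I"
  shows "\<bar>c * (\<Sum>k\<in>K. ck k * (\<Sum>I\<in>J k. f k I))\<bar> \<le> c * (\<Sum>k\<in>K. ck k * (\<Sum>I\<in>J k. g k I))"
proof -
  have summand: "\<bar>ck k * (\<Sum>I\<in>J k. f k I)\<bar> \<le> ck k * (\<Sum>I\<in>J k. g k I)" if k: "k \<in> K" for k
  proof -
    have "\<bar>\<Sum>I\<in>J k. f k I\<bar> \<le> (\<Sum>I\<in>J k. g k I)"
      by (rule order_trans[OF sum_abs sum_mono]) (rule assms(3)[OF k])
    then show ?thesis
      using assms(2)[OF k] by (simp add: abs_mult mult_left_mono)
  qed
  have "\<bar>\<Sum>k\<in>K. ck k * (\<Sum>I\<in>J k. f k I)\<bar> \<le> (\<Sum>k\<in>K. ck k * (\<Sum>I\<in>J k. g k I))"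
    by (rule order_trans[OF sum_abs sum_mono]) (rule summand)
  then show ?thesis
    using assms(1) by (simp add: abs_mult mult_left_mono)
qed

lemma abs_data_shapley_snoc_le_1:
  assumes "\<And>xs. 0 \<le> U xs \<and> U xs \<le> 1"
  shows "\<bar>data_shapley U (xs @ [z]) (length xs)\<bar> \<le> 1"
proof -
  let ?n = "length xs"
  have gain: "\<bar>U u - U v\<bar> \<le> 1" for u v
    using assms[of u] assms[of v] by linarith
  have "\<bar>data_shapley U (xs @ [z]) ?n\<bar>
      \<le> 1 / real (Suc ?n) * (\<Sum>k=1..Suc ?n. 1 / real (?n choose (k - 1)) * (\<Sum>I\<in>shapley_coalitions ?n k. 1))"
    unfolding data_shapley_snoc
    by (rule abs_weighted_sum_le) (use gain in auto)
  also have "\<dots> = 1 / real (Suc ?n) * (\<Sum>k=1..Suc ?n. 1)"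
    by (intro arg_cong[where f = "(*) _"] sum.cong) (auto simp: card_shapley_coalitions binomial_eq_0_iff)
  also have "\<dots> = 1"
    by simp
  finally show ?thesis .
qed

definition shapley_coordinate_weight :: "(nat \<Rightarrow> real) \<Rightarrow> nat \<Rightarrow> nat \<Rightarrow> real" where
  "shapley_coordinate_weight \<beta> n j = 1 / real (Suc n) * (\<Sum>k=1..Suc n. 1 / real (n choose (k - 1)) *
     (\<Sum>I\<in>shapley_coalitions n k. if j \<in> I then \<beta> k + \<beta> (k - 1) else 0))"

lemma shapley_coordinate_weight_nonneg:
  "(\<And>k. 0 \<le> \<beta> k) \<Longrightarrow> 0 \<le> shapley_coordinate_weight \<beta> n j"
  unfolding shapley_coordinate_weight_def
  by (intro mult_nonneg_nonneg sum_nonneg divide_nonneg_nonneg) (auto intro: add_nonneg_nonneg)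

lemma data_shapley_snoc_coordinate_lipschitz:
  fixes U :: "'a::metric_space list \<Rightarrow> real"
  assumes perm: "\<And>xs ys. mset xs = mset ys \<Longrightarrow> U xs = U ys"
    and lip: "lipschitz_stable U \<beta>"
    and agree: "\<And>i. i \<noteq> j \<Longrightarrow> a i = b i"
  shows "\<bar>data_shapley U (map a [0..<n] @ [z]) n - data_shapley U (map b [0..<n] @ [z]) n\<bar>
    \<le> shapley_coordinate_weight \<beta> n j * dist (a j) (b j)"
proof -
  let ?d = "dist (a j) (b j)"
  let ?L = "\<lambda>I. nths [0..<n] I"
  let ?gain = "\<lambda>w I. U (map w (?L I) @ [z]) - U (map w (?L I))"
  have shapley: "data_shapley U (map w [0..<n] @ [z]) n = 1 / real (Suc n) *
      (\<Sum>k=1..Suc n. 1 / real (n choose (k - 1)) * (\<Sum>I\<in>shapley_coalitions n k. ?gain w I))" for w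
    using data_shapley_snoc[of U "map w [0..<n]" z] by (simp add: nths_map)
  have gain: "\<bar>?gain a I - ?gain b I\<bar> \<le> (if j \<in> I then \<beta> k + \<beta> (k - 1) else 0) * ?d"
    if "k \<in> {1..Suc n}" "I \<in> shapley_coalitions n k" for k I
  proof -
    have I: "I \<subseteq> {0..<n}" "card I = k - 1"
      using that(2) by (auto simp: shapley_coalitions_def)
    have L: "distinct (?L I)" "set (?L I) = I" "length (?L I) + length [z] = k" "length (?L I) + length [] = k - 1"
      using nths_upt[OF I(1)] I(2) that(1) by auto
    have "\<bar>U (map a (?L I) @ [z]) - U (map b (?L I) @ [z])\<bar> \<le> (if j \<in> I then \<beta> k * ?d else 0)"
      using lipschitz_stable_map_agree[of U \<beta> j a b "?L I" "[z]", OF perm lip agree L(1)] unfolding L(2,3) .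
    moreover have "\<bar>U (map a (?L I)) - U (map b (?L I))\<bar> \<le> (if j \<in> I then \<beta> (k - 1) * ?d else 0)"
      using lipschitz_stable_map_agree[of U \<beta> j a b "?L I" "[]", OF perm lip agree L(1)] unfolding L(2,4) by simp
    ultimately show ?thesis
      by (auto simp: algebra_simps abs_le_iff split: if_splits)
  qed
  have "\<bar>data_shapley U (map a [0..<n] @ [z]) n - data_shapley U (map b [0..<n] @ [z]) n\<bar> =
      \<bar>1 / real (Suc n) * (\<Sum>k=1..Suc n. 1 / real (n choose (k - 1)) *
        (\<Sum>I\<in>shapley_coalitions n k. ?gain a I - ?gain b I))\<bar>"
    unfolding shapley by (simp add: sum_subtractf right_diff_distrib)
  also have "\<dots> \<le> 1 / real (Suc n) * (\<Sum>k=1..Suc n. 1 / real (n choose (k - 1)) *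
        (\<Sum>I\<in>shapley_coalitions n k. (if j \<in> I then \<beta> k + \<beta> (k - 1) else 0) * ?d))"
    by (rule abs_weighted_sum_le) (use gain in auto)
  also have "\<dots> = shapley_coordinate_weight \<beta> n j * ?d"
    unfolding shapley_coordinate_weight_def by (simp only: sum_distrib_right mult.assoc)
  finally show ?thesis .
qed

lemma sum_shapley_coordinate_weight:
  "(\<Sum>j<n. shapley_coordinate_weight \<beta> n j) =
    1 / real (Suc n) * (\<Sum>k=1..Suc n. (\<beta> k + \<beta> (k - 1)) * real (k - 1))"
proof -
  have coalition: "(\<Sum>j<n. if j \<in> I then c else 0) = c * real (k - 1)"
    if "I \<in> shapley_coalitions n k" for I k and c :: real
  proof -
    have "{..<n} \<inter> I = I" "card I = k - 1"
      using that by (auto simp: shapley_coalitions_def)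
    then show ?thesis
      using sum.inter_restrict[of "{..<n}" "\<lambda>_. c" I] by (simp add: mult.commute)
  qed
  have binomial: "1 / real (n choose (k - 1)) * (\<Sum>I\<in>shapley_coalitions n k. c) = c"
    if "k \<in> {1..Suc n}" for k and c :: real
    using that by (auto simp: card_shapley_coalitions binomial_eq_0_iff)
  have "(\<Sum>j<n. shapley_coordinate_weight \<beta> n j) = 1 / real (Suc n) * (\<Sum>k=1..Suc n.
      1 / real (n choose (k - 1)) * (\<Sum>I\<in>shapley_coalitions n k. \<Sum>j<n. if j \<in> I then \<beta> k + \<beta> (k - 1) else 0))"
    unfolding shapley_coordinate_weight_def
    by (simp add: sum_distrib_left sum.swap[of _ "{..<n}"])
  also have "\<dots> = 1 / real (Suc n) * (\<Sum>k=1..Suc n. (\<beta> k + \<beta> (k - 1)) * real (k - 1))"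
  proof (intro arg_cong[where f = "(*) _"] sum.cong refl)
    fix k assume k: "k \<in> {1..Suc n}"
    have "(\<Sum>I\<in>shapley_coalitions n k. \<Sum>j<n. if j \<in> I then \<beta> k + \<beta> (k - 1) else 0)
        = (\<Sum>I\<in>shapley_coalitions n k. (\<beta> k + \<beta> (k - 1)) * real (k - 1))"
      by (intro sum.cong refl coalition)
    then show "1 / real (n choose (k - 1)) * (\<Sum>I\<in>shapley_coalitions n k. \<Sum>j<n. if j \<in> I then \<beta> k + \<beta> (k - 1) else 0)
        = (\<beta> k + \<beta> (k - 1)) * real (k - 1)"
      using binomial[OF k] by simp
  qed
  finally show ?thesis .
qed

lemma sum_shapley_coordinate_weight_le:
  assumes "antimono \<beta>"
  shows "(\<Sum>j<n. shapley_coordinate_weight \<beta> n j) \<le> 2 / real (Suc n) * (\<Sum>k=1..n. real k * \<beta> k)"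
proof -
  have "(\<Sum>k=1..Suc n. (\<beta> k + \<beta> (k - 1)) * real (k - 1)) \<le> 2 * (\<Sum>k=1..n. real k * \<beta> k)"
  proof (induction n)
    case (Suc n)
    have "\<beta> (Suc (Suc n)) \<le> \<beta> (Suc n)"
      using assms by (simp add: antimono_def)
    then have "(\<beta> (Suc (Suc n)) + \<beta> (Suc n)) * real (Suc n) \<le> 2 * (real (Suc n) * \<beta> (Suc n))"
      using mult_right_mono[of "\<beta> (Suc (Suc n))" "\<beta> (Suc n)" "real (Suc n)"] by (simp add: algebra_simps)
    with Suc show ?case
      by (simp add: algebra_simps)
  qed simp
  then show ?thesis
    unfolding sum_shapley_coordinate_weight by (simp add: divide_right_mono)
qed

lemma measurable_potential_map:
  fixes U :: "'a::metric_space list \<Rightarrow> real"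
  assumes "potential U" and "set L \<subseteq> {..<n}"
    and \<phi>: "\<And>i. i < n \<Longrightarrow> (\<lambda>x. \<phi> x i) \<in> measurable M borel"
  shows "(\<lambda>x. U (map (\<phi> x) L @ ws)) \<in> borel_measurable M"
proof -
  let ?k = "length L + length ws"
  define \<psi> where "\<psi> x = (\<lambda>t\<in>{..<?k}. if t < length L then \<phi> x (L ! t) else ws ! (t - length L))" for x
  have "\<psi> \<in> measurable M (PiM {..<?k} (\<lambda>_. borel))"
    unfolding \<psi>_def
  proof (rule measurable_restrict)
    fix t
    show "(\<lambda>x. if t < length L then \<phi> x (L ! t) else ws ! (t - length L)) \<in> measurable M borel"
    proof (cases "t < length L")
      case True
      then have "L ! t < n"
        using \<open>set L \<subseteq> {..<n}\<close> nth_mem by blast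
      then show ?thesis
        using True \<phi> by simp
    qed simp
  qed
  moreover have "(\<lambda>y. U (map y [0..<?k])) \<in> borel_measurable (PiM {..<?k} (\<lambda>_. borel))"
    using \<open>potential U\<close> unfolding potential_def by blast
  moreover have "map (\<psi> x) [0..<?k] = map (\<phi> x) L @ ws" for x
    by (rule nth_equalityI) (auto simp: \<psi>_def nth_append)
  ultimately show ?thesis
    using measurable_comp[of \<psi> M _ "\<lambda>y. U (map y [0..<?k])"] by (simp add: o_def)
qed

lemma measurable_data_shapley_snoc:
  fixes U :: "'a::metric_space list \<Rightarrow> real"
  assumes pot: "potential U"
    and \<phi>: "\<And>i. i < n \<Longrightarrow> (\<lambda>x. \<phi> x i) \<in> measurable M borel"
  shows "(\<lambda>x. data_shapley U (map (\<phi> x) [0..<n] @ [z]) n) \<in> borel_measurable M"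
proof -
  have "data_shapley U (map (\<phi> x) [0..<n] @ [z]) n = 1 / real (Suc n) * (\<Sum>k=1..Suc n. 1 / real (n choose (k - 1)) *
      (\<Sum>I\<in>shapley_coalitions n k. U (map (\<phi> x) (nths [0..<n] I) @ [z]) - U (map (\<phi> x) (nths [0..<n] I) @ [])))" for x
    using data_shapley_snoc[of U "map (\<phi> x) [0..<n]" z] by (simp add: nths_map)
  moreover have "set (nths [0..<n] I) \<subseteq> {..<n}" for I
    by (auto simp: set_nths)
  ultimately show ?thesis
    by (simp only:) (intro borel_measurable_times borel_measurable_const borel_measurable_sum
        borel_measurable_diff measurable_potential_map[OF pot _ \<phi>])
qed

definition hybrid :: "nat \<Rightarrow> (nat \<Rightarrow> 'a \<times> 'a) \<Rightarrow> nat \<Rightarrow> 'a" where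
  "hybrid j x i = (if i < j then fst (x i) else snd (x i))"

lemma measurable_data_shapley_hybrid:
  fixes U :: "'a::metric_space list \<Rightarrow> real"
  assumes "potential U" and "fst \<in> measurable M borel" and "snd \<in> measurable M borel"
  shows "(\<lambda>x. data_shapley U (map (hybrid j x) [0..<n] @ [z]) n) \<in> borel_measurable (PiM {..<n} (\<lambda>_. M))"
proof (rule measurable_data_shapley_snoc[OF \<open>potential U\<close>])
  fix i assume "i < n"
  then have "(\<lambda>x. x i) \<in> measurable (PiM {..<n} (\<lambda>_. M)) M"
    by (intro measurable_component_singleton) simp
  then show "(\<lambda>x. hybrid j x i) \<in> measurable (PiM {..<n} (\<lambda>_. M)) borel"
    unfolding hybrid_def using assms(2,3) by (cases "i < j") (auto intro: measurable_compose)
qed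

lemma nn_integral_le_cmult:
  fixes h :: "'b \<Rightarrow> real"
  assumes "h \<in> borel_measurable M" and "0 \<le> c"
    and "\<And>y. 0 \<le> h y \<and> h y \<le> c * D y"
  shows "(\<integral>\<^sup>+ y. ennreal (h y) \<partial>M) \<le> ennreal c * (\<integral>\<^sup>+ y. ennreal (D y) \<partial>M)"
proof (cases "c = 0")
  case True
  then have "h y = 0" for y
    using assms(3)[of y] by simp
  then show ?thesis
    by simp
next
  case False
  with \<open>0 \<le> c\<close> have "0 < c"
    by simp
  \<comment> \<open>D need not be measurable (dist is not Borel on the product sigma-algebra of a non-separable
    space), so the constant is moved out through the measurable integrand h / c.\<close>
  have "(\<integral>\<^sup>+ y. ennreal (h y) \<partial>M) = (\<integral>\<^sup>+ y. ennreal c * ennreal (h y / c) \<partial>M)"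
    using \<open>0 < c\<close> assms(3) by (intro nn_integral_cong) (simp add: ennreal_mult[symmetric])
  also have "\<dots> = ennreal c * (\<integral>\<^sup>+ y. ennreal (h y / c) \<partial>M)"
    using assms(1) by (intro nn_integral_cmult measurable_compose[OF _ measurable_ennreal]
        borel_measurable_divide borel_measurable_const)
  also have "\<dots> \<le> ennreal c * (\<integral>\<^sup>+ y. ennreal (D y) \<partial>M)"
    using \<open>0 < c\<close> assms(3) by (intro mult_left_mono nn_integral_mono ennreal_leI) (auto simp: divide_le_eq mult.commute)
  finally show ?thesis .
qed

lemma ennreal_abs_integral_diff_le:
  fixes f g :: "'b \<Rightarrow> real"
  assumes "integrable M f" and "integrable M g"
  shows "ennreal \<bar>(\<integral>x. f x \<partial>M) - (\<integral>x. g x \<partial>M)\<bar> \<le> (\<integral>\<^sup>+ x. ennreal \<bar>f x - g x\<bar> \<partial>M)"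
proof -
  have "\<bar>(\<integral>x. f x \<partial>M) - (\<integral>x. g x \<partial>M)\<bar> \<le> (\<integral>x. \<bar>f x - g x\<bar> \<partial>M)"
    using integral_abs_bound[of M "\<lambda>x. f x - g x"] assms by simp
  then have "ennreal \<bar>(\<integral>x. f x \<partial>M) - (\<integral>x. g x \<partial>M)\<bar> \<le> ennreal (\<integral>x. \<bar>f x - g x\<bar> \<partial>M)"
    by (rule ennreal_leI)
  also have "\<dots> = (\<integral>\<^sup>+ x. ennreal \<bar>f x - g x\<bar> \<partial>M)"
    using assms by (intro nn_integral_eq_integral[symmetric]) auto
  finally show ?thesis .
qed

lemma nn_integral_PiM_le_coordinatewise:
  assumes "finite I" and "j \<in> I" and M: "prob_space M"
    and F: "F \<in> borel_measurable (PiM I (\<lambda>_. M))"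
    and le: "\<And>x. x \<in> space (PiM (I - {j}) (\<lambda>_. M)) \<Longrightarrow> (\<integral>\<^sup>+ y. F (x(j := y)) \<partial>M) \<le> C"
  shows "(\<integral>\<^sup>+ x. F x \<partial>PiM I (\<lambda>_. M)) \<le> C"
proof -
  interpret product_prob_space "\<lambda>_. M"
    by (rule product_prob_spaceI) (rule M)
  interpret J: prob_space "PiM (I - {j}) (\<lambda>_. M)"
    by (rule prob_space_PiM) (rule M)
  have I: "insert j (I - {j}) = I"
    using \<open>j \<in> I\<close> by auto
  have "(\<integral>\<^sup>+ x. F x \<partial>PiM I (\<lambda>_. M)) = (\<integral>\<^sup>+ x. (\<integral>\<^sup>+ y. F (x(j := y)) \<partial>M) \<partial>PiM (I - {j}) (\<lambda>_. M))"
    using product_nn_integral_insert[of "I - {j}" j F] F \<open>finite I\<close> unfolding I by simp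
  also have "\<dots> \<le> (\<integral>\<^sup>+ x. C \<partial>PiM (I - {j}) (\<lambda>_. M))"
    by (rule nn_integral_mono) (rule le)
  also have "\<dots> = C"
    by (simp add: J.emeasure_space_1)
  finally show ?thesis .
qed

lemma hybrid_step_le:
  fixes U :: "'a::metric_space list \<Rightarrow> real" and z :: 'a
  assumes pot: "potential U" and lip: "lipschitz_stable U \<beta>" and \<beta>: "\<And>k. 0 \<le> \<beta> k"
    and \<gamma>: "prob_space \<gamma>" and fst: "fst \<in> measurable \<gamma> borel" and snd: "snd \<in> measurable \<gamma> borel"
    and "j < n"
  defines "P \<equiv> PiM {..<n} (\<lambda>_. \<gamma>)"
    and "G \<equiv> \<lambda>j x. data_shapley U (map (hybrid j x) [0..<n] @ [z]) n"
  shows "ennreal \<bar>(\<integral>x. G (Suc j) x \<partial>P) - (\<integral>x. G j x \<partial>P)\<bar>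
    \<le> ennreal (shapley_coordinate_weight \<beta> n j) * (\<integral>\<^sup>+ p. ennreal (dist (fst p) (snd p)) \<partial>\<gamma>)"
proof -
  interpret P: prob_space P
    unfolding P_def by (rule prob_space_PiM) (rule \<gamma>)
  have perm: "\<And>xs ys. mset xs = mset ys \<Longrightarrow> U xs = U ys" and bounded: "\<And>xs. 0 \<le> U xs \<and> U xs \<le> 1"
    using pot unfolding potential_def by blast+
  have G: "G i \<in> borel_measurable P" for i
    unfolding G_def P_def by (rule measurable_data_shapley_hybrid[OF pot fst snd])
  have "\<bar>G i x\<bar> \<le> 1" for i x
    using abs_data_shapley_snoc_le_1[OF bounded, where xs = "map (hybrid i x) [0..<n]" and z = z]
    by (simp add: G_def)
  then have integrable: "integrable P (G i)" for i
    using G by (intro P.integrable_const_bound[where B = 1]) auto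
  have "ennreal \<bar>(\<integral>x. G (Suc j) x \<partial>P) - (\<integral>x. G j x \<partial>P)\<bar> \<le> (\<integral>\<^sup>+ x. ennreal \<bar>G (Suc j) x - G j x\<bar> \<partial>P)"
    by (intro ennreal_abs_integral_diff_le integrable)
  also have "\<dots> \<le> ennreal (shapley_coordinate_weight \<beta> n j) * (\<integral>\<^sup>+ p. ennreal (dist (fst p) (snd p)) \<partial>\<gamma>)"
    unfolding P_def
  proof (rule nn_integral_PiM_le_coordinatewise[OF finite_lessThan _ \<gamma>])
    show "(\<lambda>x. ennreal \<bar>G (Suc j) x - G j x\<bar>) \<in> borel_measurable (PiM {..<n} (\<lambda>_. \<gamma>))"
      using G unfolding P_def by measurable
    fix x assume x: "x \<in> space (PiM ({..<n} - {j}) (\<lambda>_. \<gamma>))"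
    have "(\<lambda>y. x(j := y)) \<in> measurable \<gamma> P"
      using measurable_component_update[OF x, of j] \<open>j < n\<close> unfolding P_def
      by (simp add: insert_absorb)
    then have "(\<lambda>y. \<bar>G (Suc j) (x(j := y)) - G j (x(j := y))\<bar>) \<in> borel_measurable \<gamma>"
      using G by measurable
    moreover have "\<bar>G (Suc j) (x(j := y)) - G j (x(j := y))\<bar> \<le> shapley_coordinate_weight \<beta> n j * dist (fst y) (snd y)"
      for y
      unfolding G_def using data_shapley_snoc_coordinate_lipschitz[OF perm lip,
          of j "hybrid (Suc j) (x(j := y))" "hybrid j (x(j := y))" n z]
      by (simp add: hybrid_def)
    ultimately show "(\<integral>\<^sup>+ y. ennreal \<bar>G (Suc j) (x(j := y)) - G j (x(j := y))\<bar> \<partial>\<gamma>)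
        \<le> ennreal (shapley_coordinate_weight \<beta> n j) * (\<integral>\<^sup>+ p. ennreal (dist (fst p) (snd p)) \<partial>\<gamma>)"
      by (intro nn_integral_le_cmult shapley_coordinate_weight_nonneg[OF \<beta>]) auto
  qed (use \<open>j < n\<close> in simp)
  finally show ?thesis .
qed

lemma integral_PiM_pushforward:
  fixes F :: "('i \<Rightarrow> 'b) \<Rightarrow> real"
  assumes "finite I" and "prob_space M" and "prob_space N"
    and f: "f \<in> measurable M N" and "distr M N f = N"
    and F: "F \<in> borel_measurable (PiM I (\<lambda>_. N))"
  shows "(\<integral>x. F x \<partial>PiM I (\<lambda>_. N)) = (\<integral>x. F (compose I f x) \<partial>PiM I (\<lambda>_. M))"
proof -
  have "distr (PiM I (\<lambda>_. M)) (PiM I (\<lambda>_. N)) (compose I f) = PiM I (\<lambda>_. N)"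
    using distr_PiM_finite_prob_space[OF \<open>finite I\<close>, of "\<lambda>_. M" "\<lambda>_. N" f] assms(2-5)
    by (simp add: product_prob_spaceI)
  moreover have compose: "compose I f \<in> measurable (PiM I (\<lambda>_. M)) (PiM I (\<lambda>_. N))"
    unfolding compose_def
  proof (rule measurable_restrict)
    fix i assume "i \<in> I"
    show "(\<lambda>x. f (x i)) \<in> measurable (PiM I (\<lambda>_. M)) N"
      using measurable_component_singleton[OF \<open>i \<in> I\<close>, of "\<lambda>_. M"] f by (rule measurable_compose)
  qed
  ultimately show ?thesis
    using integral_distr[OF compose F] by simp
qed

lemma dist_shapley_hybrid:
  fixes U :: "'a::metric_space list \<Rightarrow> real"
  assumes pot: "potential U" and D: "prob_space D" "sets D = sets borel"
    and "prob_space \<gamma>" and f: "f \<in> measurable \<gamma> D" and "distr \<gamma> D f = D"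
    and hybrid: "\<And>x i. i < m - 1 \<Longrightarrow> h x i = f (x i)"
  shows "dist_shapley U z D m = (\<integral>x. data_shapley U (map (h x) [0..<m - 1] @ [z]) (m - 1) \<partial>PiM {..<m - 1} (\<lambda>_. \<gamma>))"
proof -
  have "(\<lambda>x. data_shapley U (map x [0..<m - 1] @ [z]) (m - 1)) \<in> borel_measurable (PiM {..<m - 1} (\<lambda>_. D))"
  proof (rule measurable_data_shapley_snoc[OF pot])
    fix i assume "i < m - 1"
    then show "(\<lambda>x. x i) \<in> measurable (PiM {..<m - 1} (\<lambda>_. D)) borel"
      using measurable_component_singleton[of i "{..<m - 1}" "\<lambda>_. D"]
      by (simp add: measurable_cong_sets[OF refl D(2)])
  qed
  from integral_PiM_pushforward[OF finite_lessThan assms(4) D(1) f assms(6) this]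
  have "dist_shapley U z D m = (\<integral>x. data_shapley U (map (compose {..<m - 1} f x) [0..<m - 1] @ [z]) (m - 1)
      \<partial>PiM {..<m - 1} (\<lambda>_. \<gamma>))"
    unfolding dist_shapley_def .
  moreover have "map (compose {..<m - 1} f x) [0..<m - 1] = map (h x) [0..<m - 1]" for x
    using hybrid by (intro map_cong refl) (simp add: compose_def)
  ultimately show ?thesis
    by (simp only:)
qed

lemma coupling_measurable:
  assumes "\<gamma> \<in> couplings Ds Dt"
  shows "fst \<in> measurable \<gamma> Ds" "snd \<in> measurable \<gamma> Dt"
proof -
  have "sets \<gamma> = sets (Ds \<Otimes>\<^sub>M Dt)"
    using assms by (simp add: couplings_def)
  then have sets: "measurable \<gamma> N = measurable (Ds \<Otimes>\<^sub>M Dt) N" for N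
    by (rule measurable_cong_sets) simp
  show "fst \<in> measurable \<gamma> Ds"
    by (simp add: sets)
  show "snd \<in> measurable \<gamma> Dt"
    by (simp add: sets)
qed

lemma dist_shapley_diff_le_coupling:
  fixes U :: "'a::metric_space list \<Rightarrow> real"
  assumes pot: "potential U" and lip: "lipschitz_stable U \<beta>" and \<beta>: "\<And>k. 0 \<le> \<beta> k"
    and Ds: "prob_space Ds" "sets Ds = sets borel"
    and Dt: "prob_space Dt" "sets Dt = sets borel"
    and \<gamma>: "\<gamma> \<in> couplings Ds Dt"
  shows "ennreal \<bar>dist_shapley U z Ds m - dist_shapley U z Dt m\<bar>
    \<le> ennreal (\<Sum>j<m - 1. shapley_coordinate_weight \<beta> (m - 1) j) * (\<integral>\<^sup>+ p. ennreal (dist (fst p) (snd p)) \<partial>\<gamma>)"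
proof -
  define n where "n = m - 1"
  define G where "G j x = data_shapley U (map (hybrid j x) [0..<n] @ [z]) n" for j x
  let ?P = "PiM {..<n} (\<lambda>_. \<gamma>)"
  have prob: "prob_space \<gamma>" and marginals: "distr \<gamma> Ds fst = Ds" "distr \<gamma> Dt snd = Dt"
    using \<gamma> by (auto simp: couplings_def)
  have fst: "fst \<in> measurable \<gamma> borel" and snd: "snd \<in> measurable \<gamma> borel"
    using coupling_measurable[OF \<gamma>]
    by (simp_all add: measurable_cong_sets[OF refl Ds(2)] measurable_cong_sets[OF refl Dt(2)])
  have "dist_shapley U z Ds m = (\<integral>x. G n x \<partial>?P)"
    unfolding G_def n_def
    by (rule dist_shapley_hybrid[OF pot Ds prob coupling_measurable(1)[OF \<gamma>] marginals(1)]) (simp add: hybrid_def)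
  moreover have "dist_shapley U z Dt m = (\<integral>x. G 0 x \<partial>?P)"
    unfolding G_def n_def
    by (rule dist_shapley_hybrid[OF pot Dt prob coupling_measurable(2)[OF \<gamma>] marginals(2)]) (simp add: hybrid_def)
  ultimately have "dist_shapley U z Ds m - dist_shapley U z Dt m = (\<integral>x. G n x \<partial>?P) - (\<integral>x. G 0 x \<partial>?P)"
    by (simp only:)
  also have "\<dots> = (\<Sum>j<n. (\<integral>x. G (Suc j) x \<partial>?P) - (\<integral>x. G j x \<partial>?P))"
    by (rule sum_lessThan_telescope[symmetric])
  finally have "ennreal \<bar>dist_shapley U z Ds m - dist_shapley U z Dt m\<bar>
      \<le> ennreal (\<Sum>j<n. \<bar>(\<integral>x. G (Suc j) x \<partial>?P) - (\<integral>x. G j x \<partial>?P)\<bar>)"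
    by (simp only:) (intro ennreal_leI sum_abs)
  also have "\<dots> = (\<Sum>j<n. ennreal \<bar>(\<integral>x. G (Suc j) x \<partial>?P) - (\<integral>x. G j x \<partial>?P)\<bar>)"
    by simp
  also have "\<dots> \<le> (\<Sum>j<n. ennreal (shapley_coordinate_weight \<beta> n j) * (\<integral>\<^sup>+ p. ennreal (dist (fst p) (snd p)) \<partial>\<gamma>))"
    unfolding G_def by (intro sum_mono hybrid_step_le[OF pot lip \<beta> prob fst snd]) simp
  also have "\<dots> = ennreal (\<Sum>j<n. shapley_coordinate_weight \<beta> n j) * (\<integral>\<^sup>+ p. ennreal (dist (fst p) (snd p)) \<partial>\<gamma>)"
    using shapley_coordinate_weight_nonneg[OF \<beta>] by (simp add: sum_distrib_right flip: sum_ennreal)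
  finally show ?thesis
    unfolding n_def .
qed

lemma pair_measure_in_couplings:
  assumes "prob_space Ds" and "prob_space Dt"
  shows "Ds \<Otimes>\<^sub>M Dt \<in> couplings Ds Dt"
proof -
  interpret pair_prob_space Ds Dt
    using assms by (simp add: pair_prob_space_def pair_sigma_finite_def prob_space_imp_sigma_finite)
  have "distr (Ds \<Otimes>\<^sub>M Dt) Ds fst = Ds"
    by (rule prob_space.distr_pair_fst[OF assms(2)])
  moreover have "distr (Ds \<Otimes>\<^sub>M Dt) Dt snd = Dt"
  proof (rule measure_eqI)
    fix A assume A: "A \<in> sets (distr (Ds \<Otimes>\<^sub>M Dt) Dt snd)"
    then have "emeasure (distr (Ds \<Otimes>\<^sub>M Dt) Dt snd) A = emeasure (Ds \<Otimes>\<^sub>M Dt) (space Ds \<times> A)"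
      by (auto simp: emeasure_distr space_pair_measure dest: sets.sets_into_space
          intro!: arg_cong2[where f = emeasure])
    with A show "emeasure (distr (Ds \<Otimes>\<^sub>M Dt) Dt snd) A = emeasure Dt A"
      using M2.emeasure_pair_measure_Times[where A = "space Ds" and N = Ds and B = A] M1.emeasure_space_1
      by simp
  qed simp
  ultimately show ?thesis
    unfolding couplings_def using P.prob_space_axioms by auto
qed

lemma ennreal_le_cmult_INF:
  assumes "A \<noteq> {}" and "0 \<le> c" and le: "\<And>a. a \<in> A \<Longrightarrow> x \<le> ennreal c * f a"
  shows "x \<le> ennreal c * (INF a\<in>A. f a)"
proof (cases "c = 0")
  case True
  then show ?thesis
    using le \<open>A \<noteq> {}\<close> by auto
next
  case False
  with \<open>0 \<le> c\<close> have "0 < c"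
    by simp
  have "ennreal (1 / c) * x \<le> (INF a\<in>A. f a)"
  proof (rule INF_greatest)
    fix a assume "a \<in> A"
    have "ennreal (1 / c) * x \<le> ennreal (1 / c) * (ennreal c * f a)"
      by (rule mult_left_mono[OF le[OF \<open>a \<in> A\<close>]]) simp
    also have "\<dots> = f a"
      using \<open>0 < c\<close> by (simp add: mult.assoc[symmetric] ennreal_mult[symmetric])
    finally show "ennreal (1 / c) * x \<le> f a" .
  qed
  then have "ennreal c * (ennreal (1 / c) * x) \<le> ennreal c * (INF a\<in>A. f a)"
    by (rule mult_left_mono) simp
  then show ?thesis
    using \<open>0 < c\<close> by (simp add: mult.assoc[symmetric] ennreal_mult[symmetric])
qed

lemma dist_shapley_diff_le_W1:
  fixes U :: "'a::metric_space list \<Rightarrow> real"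
  assumes "potential U" and "lipschitz_stable U \<beta>" and \<beta>: "\<And>k. 0 \<le> \<beta> k"
    and "prob_space Ds" "sets Ds = sets borel"
    and "prob_space Dt" "sets Dt = sets borel"
  shows "ennreal \<bar>dist_shapley U z Ds m - dist_shapley U z Dt m\<bar>
    \<le> ennreal (\<Sum>j<m - 1. shapley_coordinate_weight \<beta> (m - 1) j) * W1 Ds Dt"
  unfolding W1_def
proof (rule ennreal_le_cmult_INF)
  show "couplings Ds Dt \<noteq> {}"
    using pair_measure_in_couplings[OF assms(4,6)] by blast
  show "0 \<le> (\<Sum>j<m - 1. shapley_coordinate_weight \<beta> (m - 1) j)"
    by (intro sum_nonneg shapley_coordinate_weight_nonneg[OF \<beta>])
qed (rule dist_shapley_diff_le_coupling[OF assms])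

theorem theorem2p8:
  fixes U :: "'a::metric_space list \<Rightarrow> real"
    and \<beta> :: "nat \<Rightarrow> real"
    and Ds Dt :: "'a measure"
  assumes "potential U"
    and "lipschitz_stable U \<beta>"
    and "antimono \<beta>"
    and "\<forall>k. 0 \<le> \<beta> k \<and> \<beta> k \<le> 1"
    and "prob_space Ds" and "sets Ds = sets borel"
    and "prob_space Dt" and "sets Dt = sets borel"
  shows "\<forall>m z. ennreal \<bar>dist_shapley U z Ds m - dist_shapley U z Dt m\<bar>
           \<le> ennreal (2 / real m * (\<Sum>k=1..m-1. real k * \<beta> k)) * W1 Ds Dt"
proof (intro allI)
  fix m z
  define c where "c = 2 / real m * (\<Sum>k=1..m-1. real k * \<beta> k)"
  have \<beta>: "\<And>k. 0 \<le> \<beta> k"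
    using assms(4) by blast
  have "(\<Sum>j<m - 1. shapley_coordinate_weight \<beta> (m - 1) j) \<le> c"
  proof (cases m)
    case (Suc n)
    then show ?thesis
      using sum_shapley_coordinate_weight_le[OF assms(3), of n] by (simp add: c_def)
  qed (simp add: c_def)
  then have "ennreal (\<Sum>j<m - 1. shapley_coordinate_weight \<beta> (m - 1) j) * W1 Ds Dt \<le> ennreal c * W1 Ds Dt"
    by (intro mult_right_mono ennreal_leI) simp_all
  with dist_shapley_diff_le_W1[OF assms(1,2) \<beta> assms(5-8)]
  show "ennreal \<bar>dist_shapley U z Ds m - dist_shapley U z Dt m\<bar> \<le> ennreal c * W1 Ds Dt"
    by (rule order_trans)
qed

end
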